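(* For all positive integers $\ell,k$, $$\det\left(f(\ell i - 1, x, qs)^j \big(-f(\ell i, x, s)\big)^{k-j}\right)_{i,j=0}^k = \det\left(f(\ell i, x, s)^j f(\ell i - 1, x, qs)^{k-j}\right)_{i,j=0}^k$$ $$= (-1)^{\binom{k+1}{3} \ell}\, s^{-\binom{k+1}{2} + \binom{k+1}{3} \ell}\, q^{\binom{k+1}{3} \binom{\ell}{2} + \binom{k+1}{4} \ell^2} \prod_{j=0}^{k-1} \mathrm{fac}(k-j, x, q^{\ell j} s, \ell).$$
   Context: Let $x,s,q$ be indeterminates; all quantities live in the field of rational functions in $x,s,q$. The Carlitz $q$-Fibonacci polynomials $f(n,x,s)$ are defined by $f(0,x,s)=0$, $f(1,x,s)=1$ and $f(n, x, s) = x f(n-1, x, s) + q^{n-2} s f(n-2, x, s)$; this recurrence is required to hold for all $n\in\mathbb{Z}$, which uniquely extends $f(n,x,s)$ to negative $n$ (e.g. $f(-1,x,s)=1/(q^{-1}s)$ times appropriate terms as determined by the recurrence). Here $f(n,x,q^a s)$ means $f(n,x,s)$ with $s$ replaced by $q^a s$. For positive integers $r,m$ define $\mathrm{fac}(r,x,s,m)=\prod_{i=1}^r f(im,x,s)$. *)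

theory Defs
  imports "Jordan_Normal_Form.Determinant"
begin

fun cfib_nat :: "nat \<Rightarrow> 'a::field \<Rightarrow> 'a \<Rightarrow> 'a \<Rightarrow> 'a" where
  "cfib_nat 0 x s q = 0"
| "cfib_nat (Suc 0) x s q = 1"
| "cfib_nat (Suc (Suc n)) x s q = x * cfib_nat (Suc n) x s q + q ^ n * s * cfib_nat n x s q"

text \<open>Backward extension: cfib_neg m x s q = f(1 - m, x, s), obtained by solving
  f(n) = x f(n-1) + q^(n-2) s f(n-2) for f(n-2), with n = 1 - m.\<close>
fun cfib_neg :: "nat \<Rightarrow> 'a::field \<Rightarrow> 'a \<Rightarrow> 'a \<Rightarrow> 'a" where
  "cfib_neg 0 x s q = 1"
| "cfib_neg (Suc 0) x s q = 0"
| "cfib_neg (Suc (Suc m)) x s q =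
     (cfib_neg m x s q - x * cfib_neg (Suc m) x s q) / (q powi (- 1 - int m) * s)"

definition cfib :: "int \<Rightarrow> 'a::field \<Rightarrow> 'a \<Rightarrow> 'a \<Rightarrow> 'a" where
  "cfib n x s q = (if 0 \<le> n then cfib_nat (nat n) x s q else cfib_neg (nat (1 - n)) x s q)"

definition cfac :: "nat \<Rightarrow> 'a::field \<Rightarrow> 'a \<Rightarrow> nat \<Rightarrow> 'a \<Rightarrow> 'a" where
  "cfac r x s m q = (\<Prod>i = 1..r. cfib (int (i * m)) x s q)"

end

theory Submission
  imports Defs
begin

text \<open>Both matrices are homogeneous Vandermonde matrices \<open>(b\<^sub>i\<^sup>j a\<^sub>i\<^sup>k\<^sup>-\<^sup>j)\<close>,
  with \<open>a\<^sub>i = f(\<ell>i - 1, x, qs)\<close>, \<open>b\<^sub>i = f(\<ell>i, x, s)\<close> for the second and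
  \<open>(-b\<^sub>i, a\<^sub>i)\<close> in place of \<open>(a\<^sub>i, b\<^sub>i)\<close> for the first, so both equal
  \<open>\<Prod>\<^sub>i\<^sub><\<^sub>j (a\<^sub>i b\<^sub>j - a\<^sub>j b\<^sub>i)\<close>.
  Since \<open>m \<mapsto> f(m - 1, x, qs)\<close> solves the same recurrence as \<open>m \<mapsto> f(m, x, s)\<close>, their
  Casoratian is computable: \<open>s (f(m-1, x, qs) f(n, x, s) - f(n-1, x, qs) f(m, x, s))
  = (-1)\<^sup>m s\<^sup>m q\<^bsup>C(m,2)\<^esup> f(n - m, x, q\<^sup>m s)\<close>. Hence the factors with a fixed \<open>i\<close>
  multiply to a monomial times \<open>fac(k - i, x, q\<^bsup>\<ell>i\<^esup> s, \<ell>)\<close>, and the exponents of the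
  monomials add up by the hockey-stick identity.\<close>

definition hom_vandermonde_mat :: "nat \<Rightarrow> (nat \<Rightarrow> 'a::comm_ring_1) \<Rightarrow> (nat \<Rightarrow> 'a) \<Rightarrow> 'a mat" where
  "hom_vandermonde_mat n a b = mat n n (\<lambda>(i,j). b i ^ j * a i ^ (n - 1 - j))"

lemma det_first_row_single_entry:
  fixes A :: "'a::comm_ring_1 mat"
  assumes A: "A \<in> carrier_mat (Suc n) (Suc n)" and j0: "j0 < Suc n"
    and zero: "\<And>j. j < Suc n \<Longrightarrow> j \<noteq> j0 \<Longrightarrow> A $$ (0,j) = 0"
  shows "det A = A $$ (0,j0) * cofactor A 0 j0"
proof -
  have "det A = (\<Sum>j<Suc n. A $$ (0,j) * cofactor A 0 j)"
    by (rule laplace_expansion_row[OF A]) simp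
  also have "\<dots> = (\<Sum>j<Suc n. if j = j0 then A $$ (0,j) * cofactor A 0 j else 0)"
    by (rule sum.cong) (auto simp: zero)
  finally show ?thesis using j0 by simp
qed

lemma det_mat_scale_rows:
  fixes c :: "nat \<Rightarrow> 'a::comm_ring_1"
  shows "det (mat n n (\<lambda>(i,j). c i * g i j)) = (\<Prod>i<n. c i) * det (mat n n (\<lambda>(i,j). g i j))"
proof -
  let ?row = "\<lambda>i. vec n (\<lambda>j. g i j)"
  have "mat n n (\<lambda>(i,j). c i * g i j) = mat\<^sub>r n n (\<lambda>i. c i \<cdot>\<^sub>v ?row i)"
    and "mat n n (\<lambda>(i,j). g i j) = mat\<^sub>r n n ?row"
    by (auto intro!: eq_matI)
  moreover have "?row \<in> {0..<n} \<rightarrow> carrier_vec n" by auto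
  ultimately show ?thesis by (simp add: det_rows_mul atLeast0LessThan)
qed

text \<open>Replacing every column \<open>C\<^sub>j\<close>, \<open>j \<ge> 1\<close>, by \<open>c C\<^sub>j - d C\<^sub>j\<^sub>-\<^sub>1\<close> is right
  multiplication by an upper triangular matrix with diagonal \<open>1, c, \<dots>, c\<close>.\<close>

lemma det_mat_combine_adjacent_cols:
  fixes A :: "'a::comm_ring_1 mat"
  assumes A: "A \<in> carrier_mat (Suc n) (Suc n)"
  shows "det (mat (Suc n) (Suc n) (\<lambda>(i,j).
           if j = 0 then A $$ (i,0) else c * A $$ (i,j) - d * A $$ (i,j-1))) = c ^ n * det A"
    (is "det ?B = _")
proof -
  define E :: "'a mat" where "E = mat (Suc n) (Suc n) (\<lambda>(r,j).
    if r = j then (if j = 0 then 1 else c) else if Suc r = j then - d else 0)"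
  have E: "E \<in> carrier_mat (Suc n) (Suc n)" unfolding E_def by simp
  have "det E = (\<Prod>r<Suc n. E $$ (r,r))"
    using det_upper_triangular[OF _ E] prod_list_diag_prod[of E] E
    by (simp add: E_def upper_triangular_def atLeast0LessThan)
  also have "\<dots> = (\<Prod>r<Suc n. if r = 0 then 1 else c)"
    by (rule prod.cong) (auto simp: E_def)
  also have "\<dots> = c ^ n"
    unfolding prod.lessThan_Suc_shift by simp
  finally have det_E: "det E = c ^ n" .
  have entry: "(A * E) $$ (i,j) = (if j = 0 then A $$ (i,0) else c * A $$ (i,j) - d * A $$ (i,j-1))"
    if i: "i < Suc n" and j: "j < Suc n" for i j
  proof -
    have AE: "(A * E) $$ (i,j) = (\<Sum>r<Suc n. A $$ (i,r) * E $$ (r,j))"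
      using i j A E by (simp add: scalar_prod_def atLeast0LessThan)
    show ?thesis
    proof (cases j)
      case 0
      have "(\<Sum>r<Suc n. A $$ (i,r) * E $$ (r,j)) = (\<Sum>r<Suc n. if r = 0 then A $$ (i,r) else 0)"
        by (rule sum.cong) (auto simp: E_def 0)
      then show ?thesis using AE 0 by simp
    next
      case (Suc j')
      have "(\<Sum>r<Suc n. A $$ (i,r) * E $$ (r,j))
          = (\<Sum>r<Suc n. (if r = j then c * A $$ (i,r) else 0) - (if r = j' then d * A $$ (i,r) else 0))"
        using j by (intro sum.cong) (auto simp: E_def Suc)
      then show ?thesis using AE Suc j by (simp add: sum_subtractf)
    qed
  qed
  have "A * E = ?B"
  proof (rule eq_matI)
    fix i j assume "i < dim_row ?B" "j < dim_col ?B"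
    then show "(A * E) $$ (i,j) = ?B $$ (i,j)"
      by (simp only: dim_row_mat dim_col_mat index_mat entry split)
  qed (use A E in simp_all)
  then show ?thesis
    using det_mult[OF A E] det_E by (simp add: mult.commute)
qed

lemma hom_vandermonde_mat_combine_adjacent_cols:
  fixes a b :: "nat \<Rightarrow> 'a::comm_ring_1" and n :: nat
  defines "V \<equiv> hom_vandermonde_mat (Suc n) a b"
  shows "mat (Suc n) (Suc n) (\<lambda>(i,j).
      if j = 0 then V $$ (i,0) else a 0 * V $$ (i,j) - b 0 * V $$ (i,j-1))
    = mat (Suc n) (Suc n) (\<lambda>(i,j).
      if j = 0 then a i ^ n else (a 0 * b i - a i * b 0) * (b i ^ (j - 1) * a i ^ (n - j)))"
proof (rule eq_matI, unfold dim_row_mat dim_col_mat)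
  fix i j assume i: "i < Suc n" and j: "j < Suc n"
  show "mat (Suc n) (Suc n) (\<lambda>(i,j).
      if j = 0 then V $$ (i,0) else a 0 * V $$ (i,j) - b 0 * V $$ (i,j-1)) $$ (i,j)
    = mat (Suc n) (Suc n) (\<lambda>(i,j).
      if j = 0 then a i ^ n else (a 0 * b i - a i * b 0) * (b i ^ (j - 1) * a i ^ (n - j))) $$ (i,j)"
  proof (cases j)
    case (Suc j')
    then have "n - j' = Suc (n - j)" using j by simp
    then show ?thesis using i j Suc by (simp add: V_def hom_vandermonde_mat_def algebra_simps)
  qed (use i j in \<open>simp add: V_def hom_vandermonde_mat_def\<close>)
qed simp_all

text \<open>If \<open>a\<^sub>0 = 0\<close>, the first row is \<open>(0, \<dots>, 0, b\<^sub>0\<^sup>n)\<close>; otherwise the column operations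
  with \<open>c = a\<^sub>0\<close>, \<open>d = b\<^sub>0\<close> reduce it to \<open>(a\<^sub>0\<^sup>n, 0, \<dots>, 0)\<close>, at the cost of a factor
  \<open>a\<^sub>0\<^sup>n\<close> that is cancelled afterwards.\<close>

lemma det_hom_vandermonde_Suc:
  fixes a b :: "nat \<Rightarrow> 'a::idom"
  shows "det (hom_vandermonde_mat (Suc n) a b)
    = (\<Prod>i<n. a 0 * b (Suc i) - a (Suc i) * b 0)
      * det (hom_vandermonde_mat n (\<lambda>i. a (Suc i)) (\<lambda>i. b (Suc i)))"
proof -
  let ?V = "hom_vandermonde_mat (Suc n) a b"
  let ?V' = "hom_vandermonde_mat n (\<lambda>i. a (Suc i)) (\<lambda>i. b (Suc i))"
  let ?P = "\<Prod>i<n. a 0 * b (Suc i) - a (Suc i) * b 0"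
  have V: "?V \<in> carrier_mat (Suc n) (Suc n)" by (simp add: hom_vandermonde_mat_def)
  show ?thesis
  proof (cases "a 0 = 0")
    case True
    have "det ?V = b 0 ^ n * cofactor ?V 0 n"
      using det_first_row_single_entry[OF V, of n] True by (simp add: hom_vandermonde_mat_def)
    moreover have "mat_delete ?V 0 n
        = mat n n (\<lambda>(i,j). a (Suc i) * (b (Suc i) ^ j * a (Suc i) ^ (n - 1 - j)))"
      by (rule eq_matI) (auto simp: mat_delete_def hom_vandermonde_mat_def Suc_diff_Suc[symmetric])
    then have "cofactor ?V 0 n = (-1) ^ n * ((\<Prod>i<n. a (Suc i)) * det ?V')"
      by (simp add: cofactor_def det_mat_scale_rows hom_vandermonde_mat_def)
    moreover have "?P = (\<Prod>i<n. (- b 0) * a (Suc i))"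
      using True by (intro prod.cong) simp_all
    then have "?P = (-1) ^ n * b 0 ^ n * (\<Prod>i<n. a (Suc i))"
      by (simp only: prod.distrib prod_constant card_lessThan power_minus[of "b 0"])
    ultimately show ?thesis by (simp only: mult_ac)
  next
    case False
    let ?W = "mat (Suc n) (Suc n) (\<lambda>(i,j).
      if j = 0 then a i ^ n else (a 0 * b i - a i * b 0) * (b i ^ (j - 1) * a i ^ (n - j)))"
    have W: "?W \<in> carrier_mat (Suc n) (Suc n)" by simp
    have "a 0 ^ n * det ?V = det ?W"
      using det_mat_combine_adjacent_cols[OF V, of "a 0" "b 0"]
      by (simp add: hom_vandermonde_mat_combine_adjacent_cols)
    also have "det ?W = a 0 ^ n * cofactor ?W 0 0"
      using det_first_row_single_entry[OF W, of 0] by simp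
    also have "mat_delete ?W 0 0 = mat n n (\<lambda>(i,j).
        (a 0 * b (Suc i) - a (Suc i) * b 0) * (b (Suc i) ^ j * a (Suc i) ^ (n - 1 - j)))"
      by (rule eq_matI) (simp_all add: mat_delete_def)
    then have "cofactor ?W 0 0 = ?P * det ?V'"
      by (simp add: cofactor_def det_mat_scale_rows hom_vandermonde_mat_def)
    finally show ?thesis using False by simp
  qed
qed

lemma prod_upper_triangle_Suc:
  fixes P :: "nat \<Rightarrow> nat \<Rightarrow> 'a::comm_monoid_mult"
  shows "(\<Prod>i<Suc n. \<Prod>j\<in>{Suc i..<Suc n}. P i j)
    = (\<Prod>i<n. P 0 (Suc i)) * (\<Prod>i<n. \<Prod>j\<in>{Suc i..<n}. P (Suc i) (Suc j))"
proof -
  have shift: "(\<Prod>j\<in>{Suc m..<Suc n}. f j) = (\<Prod>j\<in>{m..<n}. f (Suc j))" for m and f :: "nat \<Rightarrow> 'a"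
    by (rule prod.shift_bounds_Suc_ivl)
  show ?thesis
    unfolding prod.lessThan_Suc_shift shift by (simp add: lessThan_atLeast0)
qed

theorem det_hom_vandermonde:
  fixes a b :: "nat \<Rightarrow> 'a::idom"
  shows "det (hom_vandermonde_mat n a b) = (\<Prod>i<n. \<Prod>j\<in>{Suc i..<n}. a i * b j - a j * b i)"
proof (induction n arbitrary: a b)
  case 0
  show ?case by (simp add: hom_vandermonde_mat_def)
next
  case (Suc n)
  show ?case
    unfolding det_hom_vandermonde_Suc Suc.IH prod_upper_triangle_Suc ..
qed

lemma cfib_nat_Suc_Suc_shift:
  fixes x s q :: "'a::field"
  shows "cfib_nat (Suc (Suc n)) x s q
    = x * cfib_nat (Suc n) x (q * s) q + q * s * cfib_nat n x (q * (q * s)) q"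
proof (induction n rule: induct_nat_012)
  case (ge2 n)
  have "cfib_nat (Suc (Suc (Suc (Suc n)))) x s q
      = x * cfib_nat (Suc (Suc (Suc n))) x s q + q ^ Suc (Suc n) * s * cfib_nat (Suc (Suc n)) x s q"
    by (simp only: cfib_nat.simps(3))
  then show ?case
    unfolding ge2.IH by (simp add: algebra_simps)
qed (simp_all add: algebra_simps)

text \<open>The sequence \<open>G\<^sub>m = f(m - 1, x, q s)\<close> satisfies the recurrence of \<open>f(m, x, s)\<close> with
  initial values \<open>1/s, 0\<close>, so \<open>s (G\<^sub>m f(n) - G\<^sub>n f(m))\<close> is a Casoratian of the two solutions.\<close>

definition cfib_companion :: "nat \<Rightarrow> 'a::field \<Rightarrow> 'a \<Rightarrow> 'a \<Rightarrow> 'a" where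
  "cfib_companion m x s q = cfib (int m - 1) x (q * s) q"

lemma cfib_companion_0:
  fixes x s q :: "'a::field"
  assumes "q \<noteq> 0"
  shows "cfib_companion 0 x s q = inverse s"
  using assms by (simp add: cfib_companion_def cfib_def numeral_2_eq_2 power_int_minus field_simps)

lemma cfib_companion_Suc: "cfib_companion (Suc m) x s q = cfib_nat m x (q * s) q"
  by (simp add: cfib_companion_def cfib_def)

lemma cfib_companion_Suc_Suc:
  fixes x s q :: "'a::field"
  assumes "s \<noteq> 0" and "q \<noteq> 0"
  shows "cfib_companion (Suc (Suc m)) x s q
    = x * cfib_companion (Suc m) x s q + q ^ m * s * cfib_companion m x s q"
proof (cases m)
  case 0
  then show ?thesis using assms by (simp add: cfib_companion_Suc cfib_companion_0)
next
  case (Suc m')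
  then show ?thesis by (simp add: cfib_companion_Suc algebra_simps)
qed

lemma cfib_casoratian:
  fixes x s q :: "'a::field"
  assumes s: "s \<noteq> 0" and q: "q \<noteq> 0"
  shows "m \<le> n \<Longrightarrow>
    s * (cfib_companion m x s q * cfib_nat n x s q - cfib_companion n x s q * cfib_nat m x s q)
    = (-1) ^ m * s ^ m * q ^ (m choose 2) * cfib_nat (n - m) x (q ^ m * s) q"
proof (induction m rule: induct_nat_012)
  case 0
  then show ?case using s q by (simp add: cfib_companion_0 numeral_2_eq_2)
next
  case 1
  then obtain n' where "n = Suc n'" by (cases n) auto
  then show ?case by (simp add: cfib_companion_Suc numeral_2_eq_2)
next
  case (ge2 m)
  let ?C = "\<lambda>j. s * (cfib_companion j x s q * cfib_nat n x s q - cfib_companion n x s q * cfib_nat j x s q)"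
  obtain N where n: "n = N + Suc (Suc m)" using ge2.prems le_Suc_ex by (metis add.commute)
  have rec: "?C (Suc (Suc m)) = x * ?C (Suc m) + q ^ m * s * ?C m"
    unfolding cfib_companion_Suc_Suc[OF s q] cfib_nat.simps(3) by (simp add: algebra_simps)
  have IH0: "?C m = (-1) ^ m * s ^ m * q ^ (m choose 2) * cfib_nat (Suc (Suc N)) x (q ^ m * s) q"
    using ge2.IH(1) n by simp
  have IH1: "?C (Suc m)
      = (-1) ^ Suc m * s ^ Suc m * q ^ (Suc m choose 2) * cfib_nat (Suc N) x (q ^ Suc m * s) q"
    using ge2.IH(2) n by simp
  have choose_Suc: "Suc m choose 2 = (m choose 2) + m"
    and choose_Suc_Suc: "Suc (Suc m) choose 2 = (m choose 2) + m + m + 1"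
    by (simp_all add: numeral_2_eq_2)
  show ?case
    unfolding rec IH0 IH1 cfib_nat_Suc_Suc_shift[of N x "q ^ m * s"] choose_Suc choose_Suc_Suc
    using n by (simp add: algebra_simps power_add)
qed

lemma sum_diff_mult_choose: "(\<Sum>i\<le>k. (k - i) * (i choose m)) = Suc k choose (m + 2)"
proof (induction k)
  case (Suc k)
  have "(\<Sum>i\<le>Suc k. (Suc k - i) * (i choose m)) = (\<Sum>i\<le>k. (k - i) * (i choose m) + (i choose m))"
    by (simp add: Suc_diff_le ac_simps)
  also have "\<dots> = (Suc k choose (m + 2)) + (Suc k choose Suc m)"
    by (simp only: sum.distrib Suc.IH sum_choose_upper)
  finally show ?case by simp
qed simp

lemma choose_two_add: "(a + b choose 2) = (a choose 2) + (b choose 2) + a * b"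
  by (induction b) (simp_all add: numeral_2_eq_2)

lemma choose_two_mult: "(l * i choose 2) = l ^ 2 * (i choose 2) + (l choose 2) * i"
proof (induction i)
  case (Suc i)
  have "(l * Suc i choose 2) = (l * i choose 2) + (l choose 2) + l * i * l"
    using choose_two_add[of "l * i" l] by (simp add: add.commute)
  then show ?case
    using Suc by (simp add: numeral_2_eq_2 power2_eq_square algebra_simps)
qed simp

lemma sum_diff_mult_choose_two_mult:
  "(\<Sum>i\<le>k. (k - i) * (l * i choose 2)) = (Suc k choose 3) * (l choose 2) + (Suc k choose 4) * l ^ 2"
proof -
  have "(\<Sum>i\<le>k. (k - i) * (l * i choose 2))
      = (\<Sum>i\<le>k. l ^ 2 * ((k - i) * (i choose 2)) + (l choose 2) * ((k - i) * (i choose 1)))"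
    unfolding choose_two_mult[of l] by (rule sum.cong) (simp_all add: distrib_left mult_ac)
  also have "\<dots> = l ^ 2 * (\<Sum>i\<le>k. (k - i) * (i choose 2)) + (l choose 2) * (\<Sum>i\<le>k. (k - i) * (i choose 1))"
    by (simp only: sum.distrib sum_distrib_left)
  also have "\<dots> = (Suc k choose 3) * (l choose 2) + (Suc k choose 4) * l ^ 2"
    by (simp only: sum_diff_mult_choose) (simp add: ac_simps numeral_eq_Suc)
  finally show ?thesis .
qed

lemma prod_cfib_casoratian_row:
  fixes x s q :: "'a::field"
  assumes s: "s \<noteq> 0" and q: "q \<noteq> 0" and "i \<le> k"
  shows "(\<Prod>j\<in>{Suc i..<Suc k}. cfib_companion (l * i) x s q * cfib_nat (l * j) x s q
                              - cfib_companion (l * j) x s q * cfib_nat (l * i) x s q)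
    = ((-1) ^ (l * i) * s ^ (l * i) * q ^ (l * i choose 2) / s) ^ (k - i)
      * cfac (k - i) x (q ^ (l * i) * s) l q"
proof -
  let ?c = "(-1) ^ (l * i) * s ^ (l * i) * q ^ (l * i choose 2) / s"
  have "(\<Prod>j\<in>{Suc i..<Suc k}. cfib_companion (l * i) x s q * cfib_nat (l * j) x s q
                              - cfib_companion (l * j) x s q * cfib_nat (l * i) x s q)
      = (\<Prod>j\<in>{Suc i..<Suc k}. ?c * cfib_nat (l * j - l * i) x (q ^ (l * i) * s) q)"
    using cfib_casoratian[OF s q] s by (intro prod.cong) (simp_all add: field_simps)
  also have "\<dots> = ?c ^ (k - i) * (\<Prod>j\<in>{Suc i..<Suc k}. cfib_nat (l * j - l * i) x (q ^ (l * i) * s) q)"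
    by (simp only: prod.distrib prod_constant card_atLeastLessThan diff_Suc_Suc)
  also have "(\<Prod>j\<in>{Suc i..<Suc k}. cfib_nat (l * j - l * i) x (q ^ (l * i) * s) q)
      = cfac (k - i) x (q ^ (l * i) * s) l q"
    unfolding cfac_def cfib_def
    using prod.shift_bounds_nat_ivl[of "\<lambda>j. cfib_nat (l * j - l * i) x (q ^ (l * i) * s) q" 1 i "Suc (k - i)"]
      \<open>i \<le> k\<close>
    by (simp add: Suc_diff_le distrib_left atLeastLessThanSuc_atLeastAtMost nat_mult_distrib mult.commute)
  finally show ?thesis .
qed

lemma prod_casoratian_monomials:
  fixes s q :: "'a::field"
  assumes "s \<noteq> 0"
  shows "(\<Prod>i\<le>k. ((-1) ^ (l * i) * s ^ (l * i) * q ^ (l * i choose 2) / s) ^ (k - i))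
    = (-1) ^ ((k+1 choose 3) * l) * s powi (int ((k+1 choose 3) * l) - int (k+1 choose 2))
      * q ^ ((k+1 choose 3) * (l choose 2) + (k+1 choose 4) * l^2)"
proof -
  have "(\<Prod>i\<le>k. ((-1) ^ (l * i) * s ^ (l * i) * q ^ (l * i choose 2) / s) ^ (k - i))
      = (\<Prod>i\<le>k. (-1) ^ ((k - i) * (l * i)) * s ^ ((k - i) * (l * i))
                    * q ^ ((k - i) * (l * i choose 2)) / s ^ (k - i))"
    by (simp add: power_mult_distrib power_divide power_mult[symmetric] mult.commute)
  also have "\<dots> = (-1) ^ (\<Sum>i\<le>k. (k - i) * (l * i)) * s ^ (\<Sum>i\<le>k. (k - i) * (l * i))
      * q ^ (\<Sum>i\<le>k. (k - i) * (l * i choose 2)) / s ^ (\<Sum>i\<le>k. k - i)"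
    by (simp add: power_sum prod.distrib prod_dividef)
  also have "(\<Sum>i\<le>k. (k - i) * (l * i)) = l * (\<Sum>i\<le>k. (k - i) * (i choose 1))"
    by (simp add: sum_distrib_left mult_ac)
  also have "\<dots> = (k+1 choose 3) * l"
    by (simp only: sum_diff_mult_choose) (simp add: numeral_eq_Suc mult.commute)
  also have "(\<Sum>i\<le>k. k - i) = k+1 choose 2"
    using sum_diff_mult_choose[of k 0] by (simp add: numeral_eq_Suc)
  moreover have "s powi (int ((k+1 choose 3) * l) - int (k+1 choose 2))
      = s ^ ((k+1 choose 3) * l) / s ^ (k+1 choose 2)"
    by (simp only: power_int_diff[OF disjI1[OF assms]] power_int_of_nat)
  ultimately show ?thesis
    by (simp add: sum_diff_mult_choose_two_mult)
qed

lemma prod_cfib_casoratian: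
  fixes x s q :: "'a::field"
  assumes s: "s \<noteq> 0" and q: "q \<noteq> 0" and "0 < k"
  shows "(\<Prod>i<Suc k. \<Prod>j\<in>{Suc i..<Suc k}.
            cfib_companion (l * i) x s q * cfib_nat (l * j) x s q
            - cfib_companion (l * j) x s q * cfib_nat (l * i) x s q)
    = (-1) ^ ((k+1 choose 3) * l) * s powi (int ((k+1 choose 3) * l) - int (k+1 choose 2))
      * q ^ ((k+1 choose 3) * (l choose 2) + (k+1 choose 4) * l^2)
      * (\<Prod>j = 0..k-1. cfac (k - j) x (q ^ (l * j) * s) l q)"
proof -
  obtain k' where k: "k = Suc k'" using \<open>0 < k\<close> gr0_implies_Suc by blast
  have "(\<Prod>i\<le>k. cfac (k - i) x (q ^ (l * i) * s) l q)
      = (\<Prod>j = 0..k-1. cfac (k - j) x (q ^ (l * j) * s) l q)"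
    by (simp add: k atLeast0AtMost cfac_def)
  moreover have "(\<Prod>i\<le>k. \<Prod>j\<in>{Suc i..<Suc k}.
            cfib_companion (l * i) x s q * cfib_nat (l * j) x s q
            - cfib_companion (l * j) x s q * cfib_nat (l * i) x s q)
    = (\<Prod>i\<le>k. ((-1) ^ (l * i) * s ^ (l * i) * q ^ (l * i choose 2) / s) ^ (k - i)
                  * cfac (k - i) x (q ^ (l * i) * s) l q)"
    by (intro prod.cong refl prod_cfib_casoratian_row[OF s q]) simp
  ultimately show ?thesis
    unfolding lessThan_Suc_atMost prod_casoratian_monomials[OF s, symmetric]
    by (simp only: prod.distrib)
qed

theorem lemma3:
  fixes x s q :: "'a::field"
  assumes "s \<noteq> 0" and "q \<noteq> 0"
    and "0 < l" and "0 < k"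
  shows "det (mat (k+1) (k+1) (\<lambda>(i,j).
             cfib (int l * int i - 1) x (q * s) q ^ j * (- cfib (int l * int i) x s q) ^ (k - j)))
         = det (mat (k+1) (k+1) (\<lambda>(i,j).
             cfib (int l * int i) x s q ^ j * cfib (int l * int i - 1) x (q * s) q ^ (k - j)))
       \<and> det (mat (k+1) (k+1) (\<lambda>(i,j).
             cfib (int l * int i) x s q ^ j * cfib (int l * int i - 1) x (q * s) q ^ (k - j)))
         = (- 1) ^ ((k+1 choose 3) * l)
           * s powi (int ((k+1 choose 3) * l) - int (k+1 choose 2))
           * q ^ ((k+1 choose 3) * (l choose 2) + (k+1 choose 4) * l^2)
           * (\<Prod>j = 0..k-1. cfac (k - j) x (q ^ (l * j) * s) l q)"
proof -
  define G where "G i = cfib_companion (l * i) x s q" for i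
  define F where "F i = cfib_nat (l * i) x s q" for i
  have G: "cfib (int l * int i - 1) x (q * s) q = G i" for i
    by (simp add: G_def cfib_companion_def)
  have F: "cfib (int l * int i) x s q = F i" for i
    by (simp add: F_def cfib_def nat_mult_distrib)
  let ?P = "\<Prod>i<Suc k. \<Prod>j\<in>{Suc i..<Suc k}. G i * F j - G j * F i"
  have "det (hom_vandermonde_mat (Suc k) (\<lambda>i. - F i) G) = ?P"
    unfolding det_hom_vandermonde by (intro prod.cong) (simp_all add: algebra_simps)
  moreover have "det (hom_vandermonde_mat (Suc k) G F) = ?P"
    by (rule det_hom_vandermonde)
  moreover have "?P = (- 1) ^ ((k+1 choose 3) * l)
           * s powi (int ((k+1 choose 3) * l) - int (k+1 choose 2))
           * q ^ ((k+1 choose 3) * (l choose 2) + (k+1 choose 4) * l^2)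
           * (\<Prod>j = 0..k-1. cfac (k - j) x (q ^ (l * j) * s) l q)"
    unfolding G_def F_def using assms by (intro prod_cfib_casoratian)
  ultimately show ?thesis
    unfolding G F by (simp add: hom_vandermonde_mat_def)
qed

end
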